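(* Let $G=(L,R,E)$ be a bipartite graph, $f:2^E\to\mathbb{R}_{\ge0}$ non-negative, monotonically non-decreasing and submodular, $p\in(0,1)$, and run $\mathrm{SIMULATE2}$ (see context) to obtain $M,N,S$ and $w$. For any $t>0$, with $\alpha=\frac{p}{1-p}$ and $\theta=\frac{t+\alpha}{\alpha}$, $$\mathbb{E}[f(S)]\ge\Big(\frac1\theta-\frac{1}{t\,p^2}\Big)\mathbb{E}[w(S)].$$
   Context: $f_M(e)=f(M\cup\{e\})-f(M)$. $\mathrm{SIMULATE2}$: start with $M=N=\emptyset$ and a working copy of $E$. While there is an edge $e^*=(\ell^*,r^* )$ in the working edge set such that $M\cup\{e^*\}$ is a matching, take such an edge maximizing $f_M(e^* )$ (fixed tie-breaking); let $M_{e^*}$ be the current $M$; flip an independent coin with head probability $p$; on heads add $e^*$ to $M$, otherwise to $N$; then remove all edges incident to $\ell^*$ from the working edge set. Finally let $S$ be the set of edges $(\ell,r)\in N$ that are the only edge of $N$ incident to $r$. Define $w(e)=f_{M_e}(e)$ for every edge $e$ selected during the loop and $w(e)=0$ for all other edges; $w(T)=\sum_{e\in T}w(e)$. *)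

theory Defs
  imports "HOL-Probability.Probability"
begin

type_synonym ('l, 'r) edge = "'l \<times> 'r"

definition is_matching :: "('l \<times> 'r) set \<Rightarrow> bool" where
  "is_matching M \<longleftrightarrow> (\<forall>e1\<in>M. \<forall>e2\<in>M. e1 \<noteq> e2 \<longrightarrow> fst e1 \<noteq> fst e2 \<and> snd e1 \<noteq> snd e2)"

definition marg :: "(('l \<times> 'r) set \<Rightarrow> real) \<Rightarrow> ('l \<times> 'r) set \<Rightarrow> 'l \<times> 'r \<Rightarrow> real" where
  "marg f M e = f (insert e M) - f M"

definition cands :: "('l \<times> 'r) set \<Rightarrow> ('l \<times> 'r) set \<Rightarrow> ('l \<times> 'r) set" where
  "cands M W = {e \<in> W. is_matching (insert e M)}"

definition select :: "(('l \<times> 'r) set \<Rightarrow> real) \<Rightarrow> ('l \<times> 'r \<Rightarrow> nat) \<Rightarrow> ('l \<times> 'r) set \<Rightarrow> ('l \<times> 'r) set \<Rightarrow> 'l \<times> 'r" where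
  "select f tb M C =
     (let best = Max (marg f M ` C);
          T = {e \<in> C. marg f M e = best}
      in THE e. e \<in> T \<and> tb e = Min (tb ` T))"

text \<open>State: (M, N, working edge set, weight function w).
  The i-th loop iteration uses coin c i (True = heads).  The fuel bounds the
  number of iterations; with fuel = card E the loop always terminates.\<close>
fun sim2_loop :: "(('l \<times> 'r) set \<Rightarrow> real) \<Rightarrow> ('l \<times> 'r \<Rightarrow> nat) \<Rightarrow> (nat \<Rightarrow> bool) \<Rightarrow> nat \<Rightarrow> nat
   \<Rightarrow> ('l \<times> 'r) set \<times> ('l \<times> 'r) set \<times> ('l \<times> 'r) set \<times> ('l \<times> 'r \<Rightarrow> real)
   \<Rightarrow> ('l \<times> 'r) set \<times> ('l \<times> 'r) set \<times> ('l \<times> 'r) set \<times> ('l \<times> 'r \<Rightarrow> real)" where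
  "sim2_loop f tb c i 0 st = st"
| "sim2_loop f tb c i (Suc n) (M, N, W, w) =
     (if cands M W = {} then (M, N, W, w)
      else (let e = select f tb M (cands M W);
                w' = w(e := marg f M e);
                W' = W - {e' \<in> W. fst e' = fst e}
            in if c i then sim2_loop f tb c (Suc i) n (insert e M, N, W', w')
               else sim2_loop f tb c (Suc i) n (M, insert e N, W', w')))"

definition simulate2 :: "('l \<times> 'r) set \<Rightarrow> (('l \<times> 'r) set \<Rightarrow> real) \<Rightarrow> ('l \<times> 'r \<Rightarrow> nat) \<Rightarrow> (nat \<Rightarrow> bool)
   \<Rightarrow> ('l \<times> 'r) set \<times> ('l \<times> 'r) set \<times> ('l \<times> 'r \<Rightarrow> real)" where
  "simulate2 E f tb c =
     (case sim2_loop f tb c 0 (card E) ({}, {}, E, (\<lambda>_. 0)) of (M, N, W, w) \<Rightarrow> (M, N, w))"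

definition S_of :: "('l \<times> 'r) set \<Rightarrow> ('l \<times> 'r) set" where
  "S_of N = {e \<in> N. \<forall>e'\<in>N. snd e' = snd e \<longrightarrow> e' = e}"

definition coins :: "nat \<Rightarrow> real \<Rightarrow> (nat \<Rightarrow> bool) pmf" where
  "coins n p = Pi_pmf {..<n} False (\<lambda>_. bernoulli_pmf p)"

end

theory Submission
  imports Defs
begin

text \<open>The loop is analysed with the potential
  \<open>\<Phi>\<^sub>\<delta> = (1 - p)/p \<cdot> w(S) - \<delta> - (1 - p) \<cdot> (f(M \<union> S) - f(M)) - (1 - p)\<^sup>2/p \<cdot> w(F)\<close>,
  where \<open>S = S_of N\<close>, \<open>F\<close> consists of the edges of \<open>S\<close> whose right endpoint \<open>M\<close> leaves uncovered,
  and the slack \<open>\<delta>\<close> is maintained so that \<open>w(U) \<le> f(U) + \<delta>\<close> for every \<open>U \<subseteq> S\<close>.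
  By diminishing returns, one iteration never decreases the coin-averaged potential
  (when the tails branch adds the selected edge \<open>e\<close> to \<open>S\<close>, the slack grows by
  \<open>f\<^bsub>M\<^esub>(e) - f\<^bsub>M \<union> S\<^esub>(e)\<close>), and at termination \<open>\<Phi>\<^sub>\<delta> \<le> f(S) - (2 - 1/p) \<cdot> w(S)\<close>.
  As \<open>\<Phi>\<^sub>0 = 0\<close> initially, \<open>E f(S) \<ge> (2 - 1/p) \<cdot> E w(S)\<close>; together with \<open>E f(S) \<ge> 0\<close> this
  suffices, because the coefficient \<open>1/\<theta> - 1/(t p\<^sup>2)\<close> never exceeds \<open>max (2 - 1/p) 0\<close>.\<close>

lemma S_of_subset: "S_of N \<subseteq> N"
  unfolding S_of_def by blast

lemma S_of_insert_new_right:
  assumes "\<forall>e'\<in>N. snd e' \<noteq> snd e"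
  shows "S_of (insert e N) = insert e (S_of N)"
proof (rule set_eqI)
  fix x
  show "x \<in> S_of (insert e N) \<longleftrightarrow> x \<in> insert e (S_of N)"
    using assms unfolding S_of_def by (cases "x = e") (simp_all, metis+)
qed

lemma S_of_insert_old_right:
  assumes "e \<notin> N" "e' \<in> N" "snd e' = snd e"
  shows "S_of (insert e N) = {x \<in> S_of N. snd x \<noteq> snd e}"
proof (rule set_eqI)
  fix x
  show "x \<in> S_of (insert e N) \<longleftrightarrow> x \<in> {x \<in> S_of N. snd x \<noteq> snd e}"
    using assms unfolding S_of_def by (cases "x = e") (simp_all, metis+)
qed

lemma select_mem:
  assumes "finite C" "C \<noteq> {}" "inj_on tb C"
  shows "select f tb M C \<in> C"
proof -
  define T where "T = {e \<in> C. marg f M e = Max (marg f M ` C)}"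
  have "Max (marg f M ` C) \<in> marg f M ` C"
    using assms(1,2) by (intro Max_in) auto
  then have T: "T \<noteq> {}" "finite T" "T \<subseteq> C"
    using assms(1) unfolding T_def by (auto, blast)
  then have "Min (tb ` T) \<in> tb ` T"
    by (intro Min_in) auto
  then obtain e where e: "e \<in> T" "tb e = Min (tb ` T)"
    by auto
  moreover have "x = e" if "x \<in> T" "tb x = Min (tb ` T)" for x
    using that e T(3) inj_onD[OF assms(3), of x e] by auto
  ultimately have "(THE e. e \<in> T \<and> tb e = Min (tb ` T)) \<in> T"
    by (metis (mono_tags, lifting) theI)
  then show ?thesis
    unfolding select_def Let_def T_def by auto
qed

lemma expectation_Pi_pmf_bernoulli_insert:
  fixes g :: "(nat \<Rightarrow> bool) \<Rightarrow> real"
  assumes "0 \<le> p" "p \<le> 1" "finite A" "i \<notin> A"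
  shows "measure_pmf.expectation (Pi_pmf (insert i A) False (\<lambda>_. bernoulli_pmf p)) g =
     p * measure_pmf.expectation (Pi_pmf A False (\<lambda>_. bernoulli_pmf p)) (\<lambda>c. g (c(i := True)))
   + (1 - p) * measure_pmf.expectation (Pi_pmf A False (\<lambda>_. bernoulli_pmf p)) (\<lambda>c. g (c(i := False)))"
proof -
  let ?P = "Pi_pmf A False (\<lambda>_. bernoulli_pmf p)"
  have "Pi_pmf (insert i A) False (\<lambda>_. bernoulli_pmf p) =
     bernoulli_pmf p \<bind> (\<lambda>b. map_pmf (\<lambda>c. c(i := b)) ?P)"
    using assms by (subst Pi_pmf_insert') (auto simp: map_pmf_def)
  moreover have "finite (set_pmf (map_pmf (\<lambda>c. c(i := b)) ?P))" for b
    using assms(3) by (simp add: set_Pi_pmf finite_PiE_dflt)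
  ultimately show ?thesis
    by (simp only:) (subst pmf_expectation_bind[of UNIV], use assms in \<open>auto simp: UNIV_bool\<close>)
qed

lemma sim2_loop_cong:
  "(\<And>j. i \<le> j \<Longrightarrow> c j = c' j) \<Longrightarrow> sim2_loop f tb c i n st = sim2_loop f tb c' i n st"
proof (induction n arbitrary: i st)
  case (Suc n)
  then show ?case
    by (cases st) (simp add: Let_def)
qed simp

lemma sim2_loop_Suc_update:
  fixes f :: "('l \<times> 'r) set \<Rightarrow> real" and tb :: "'l \<times> 'r \<Rightarrow> nat"
  assumes "cands M W \<noteq> {}"
  defines "e \<equiv> select f tb M (cands M W)"
  shows "sim2_loop f tb (c(i := b)) i (Suc n) (M, N, W, w) =
    sim2_loop f tb c (Suc i) n
      (if b then insert e M else M, if b then N else insert e N,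
       W - {e' \<in> W. fst e' = fst e}, w(e := marg f M e))"
proof -
  have later_coins: "sim2_loop f tb (c(i := b')) (Suc i) n st = sim2_loop f tb c (Suc i) n st"
    for b' st
    by (rule sim2_loop_cong) auto
  show ?thesis
    using assms by (cases b) (simp_all add: Let_def later_coins)
qed

type_synonym ('l, 'r) state = "('l \<times> 'r) set \<times> ('l \<times> 'r) set \<times> ('l \<times> 'r) set \<times> ('l \<times> 'r \<Rightarrow> real)"

definition wf_state :: "('l \<times> 'r) set \<Rightarrow> ('l, 'r) state \<Rightarrow> bool" where
  "wf_state E st \<longleftrightarrow> (case st of (M, N, W, w) \<Rightarrow>
     M \<subseteq> E \<and> N \<subseteq> E \<and> W \<subseteq> E \<and> W \<inter> M = {} \<and> W \<inter> N = {} \<and> is_matching M \<and> (\<forall>e\<in>N. 0 \<le> w e))"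

definition weights_dominated :: "(('l \<times> 'r) set \<Rightarrow> real) \<Rightarrow> real \<Rightarrow> ('l, 'r) state \<Rightarrow> bool" where
  "weights_dominated f \<delta> st \<longleftrightarrow> (case st of (M, N, W, w) \<Rightarrow> \<forall>U \<subseteq> S_of N. sum w U \<le> f U + \<delta>)"

definition phi :: "real \<Rightarrow> real \<Rightarrow> real \<Rightarrow> real \<Rightarrow> real \<Rightarrow> real" where
  "phi p a \<delta> s u = (1 - p) / p * a - \<delta> - (1 - p) * s - (1 - p)\<^sup>2 / p * u"

definition potential :: "(('l \<times> 'r) set \<Rightarrow> real) \<Rightarrow> real \<Rightarrow> real \<Rightarrow> ('l, 'r) state \<Rightarrow> real" where
  "potential f p \<delta> st = (case st of (M, N, W, w) \<Rightarrow>
     phi p (sum w (S_of N)) \<delta> (f (M \<union> S_of N) - f M) (sum w {x \<in> S_of N. snd x \<notin> snd ` M}))"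

definition gain :: "(('l \<times> 'r) set \<Rightarrow> real) \<Rightarrow> real \<Rightarrow> ('l, 'r) state \<Rightarrow> real" where
  "gain f p st = (case st of (M, N, W, w) \<Rightarrow> f (S_of N) - (2 - 1 / p) * sum w (S_of N))"

lemma phi_eq_average_new_right:
  assumes "0 < p"
  shows "phi p a \<delta> s u = p * phi p a \<delta> (s + y - x) u + (1 - p) * phi p (a + x) (\<delta> + x - y) (s + y) (u + x)"
  using assms by (simp add: phi_def field_simps power2_eq_square)

lemma phi_le_average_old_right:
  assumes "0 < p" "p < 1" "y \<le> x" "s' \<le> s"
  shows "phi p a \<delta> s u \<le> p * phi p a \<delta> (s + y - x) (u - b) + (1 - p) * phi p (a - b) \<delta> s' (u - b)"
proof -
  have "p * phi p a \<delta> (s + y - x) (u - b) + (1 - p) * phi p (a - b) \<delta> s' (u - b) - phi p a \<delta> s u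
      = p * (1 - p) * (x - y) + (1 - p)\<^sup>2 * (s - s')"
    using assms(1) by (simp add: phi_def field_simps power2_eq_square)
  moreover have "0 \<le> p * (1 - p) * (x - y) + (1 - p)\<^sup>2 * (s - s')"
    using assms by simp
  ultimately show ?thesis
    by linarith
qed

locale submodular_on =
  fixes E :: "('l \<times> 'r) set" and f :: "('l \<times> 'r) set \<Rightarrow> real"
  assumes mono: "\<And>A B. A \<subseteq> B \<Longrightarrow> B \<subseteq> E \<Longrightarrow> f A \<le> f B"
    and submod: "\<And>A B. A \<subseteq> E \<Longrightarrow> B \<subseteq> E \<Longrightarrow> f (A \<union> B) + f (A \<inter> B) \<le> f A + f B"
begin

lemma marg_antimono:
  assumes "A \<subseteq> B" "B \<subseteq> E" "e \<in> E"
  shows "marg f B e \<le> marg f A e"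
proof (cases "e \<in> B")
  case True
  then show ?thesis
    using assms mono[of A "insert e A"] by (simp add: marg_def insert_absorb subset_insertI)
next
  case False
  have "f (insert e A \<union> B) + f (insert e A \<inter> B) \<le> f (insert e A) + f B"
    using assms by (intro submod) auto
  moreover have "insert e A \<union> B = insert e B" "insert e A \<inter> B = A"
    using assms False by auto
  ultimately show ?thesis
    by (simp add: marg_def)
qed

lemma marg_nonneg: "A \<subseteq> E \<Longrightarrow> e \<in> E \<Longrightarrow> 0 \<le> marg f A e"
  using mono[of A "insert e A"] by (simp add: marg_def subset_insertI)

end

locale simulate2_setting = submodular_on E f for E f +
  fixes tb :: "'l \<times> 'r \<Rightarrow> nat" and p :: real
  assumes finite_E: "finite E"
    and nonneg: "\<And>A. A \<subseteq> E \<Longrightarrow> 0 \<le> f A"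
    and inj_tb: "inj_on tb E"
    and p_pos: "0 < p" and p_less_1: "p < 1"
begin

context
  fixes M N W w e W' w'
  assumes wf: "wf_state E (M, N, W, w)" and cand: "e \<in> cands M W"
    and W'_def: "W' = W - {e' \<in> W. fst e' = fst e}" and w'_def: "w' = w(e := marg f M e)"
begin

lemma cand_edge: "e \<in> E" "e \<notin> M" "e \<notin> N" "snd e \<notin> snd ` M"
proof -
  have "e \<in> W" "is_matching (insert e M)"
    using cand by (auto simp: cands_def)
  then show "e \<in> E" "e \<notin> M" "e \<notin> N"
    using wf by (auto simp: wf_state_def)
  then show "snd e \<notin> snd ` M"
    using \<open>is_matching (insert e M)\<close> unfolding is_matching_def by force
qed

lemma wf_state_successors:
  "wf_state E (insert e M, N, W', w')" "wf_state E (M, insert e N, W', w')"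
  using wf cand cand_edge(1) marg_nonneg[of M e]
  by (auto simp: wf_state_def cands_def W'_def w'_def)

lemma sum_w'_eq: "e \<notin> A \<Longrightarrow> sum w' A = sum w A"
  unfolding w'_def by (intro sum.cong) auto

lemma weights_dominated_head:
  assumes "weights_dominated f \<delta> (M, N, W, w)"
  shows "weights_dominated f \<delta> (insert e M, N, W', w')"
proof -
  have "e \<notin> U" if "U \<subseteq> S_of N" for U
    using that cand_edge(3) S_of_subset by blast
  then show ?thesis
    using assms sum_w'_eq by (simp add: weights_dominated_def)
qed

lemma weights_dominated_tail_new_right:
  assumes dom: "weights_dominated f \<delta> (M, N, W, w)" and new: "\<forall>e'\<in>N. snd e' \<noteq> snd e"
  shows "weights_dominated f (\<delta> + marg f M e - marg f (M \<union> S_of N) e) (M, insert e N, W', w')"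
proof -
  have "sum w' A \<le> f A + (\<delta> + marg f M e - marg f (M \<union> S_of N) e)" if A: "A \<subseteq> insert e (S_of N)" for A
  proof (cases "e \<in> A")
    case True
    define A' where "A' = A - {e}"
    have "A \<subseteq> E"
      using A wf S_of_subset[of N] cand_edge(1) by (auto simp: wf_state_def)
    then have A': "A' \<subseteq> S_of N" "e \<notin> A'" "finite A'" "A = insert e A'"
      using A True finite_subset[OF _ finite_E] by (auto simp: A'_def)
    have "sum w' A = marg f M e + sum w A'"
      using A' sum_w'_eq[of A'] by (simp add: w'_def)
    moreover have "sum w A' \<le> f A' + \<delta>"
      using dom A'(1) by (auto simp: weights_dominated_def)
    moreover have "marg f (M \<union> S_of N) e \<le> marg f A' e"
      using A'(1) wf S_of_subset[of N] cand_edge(1) by (intro marg_antimono) (auto simp: wf_state_def)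
    moreover have "f A = f A' + marg f A' e"
      using A'(4) by (simp add: marg_def)
    ultimately show ?thesis
      by linarith
  next
    case False
    then have "sum w A \<le> f A + \<delta>"
      using A dom by (auto simp: weights_dominated_def)
    moreover have "marg f (M \<union> S_of N) e \<le> marg f M e"
      using wf S_of_subset[of N] cand_edge(1) by (intro marg_antimono) (auto simp: wf_state_def)
    ultimately show ?thesis
      using sum_w'_eq[OF False] by linarith
  qed
  then show ?thesis
    using S_of_insert_new_right[OF new] by (simp add: weights_dominated_def)
qed

lemma weights_dominated_tail_old_right:
  assumes "weights_dominated f \<delta> (M, N, W, w)" and "e'' \<in> N" "snd e'' = snd e"
  shows "weights_dominated f \<delta> (M, insert e N, W', w')"
proof -
  have "e \<notin> U" "U \<subseteq> S_of N" if "U \<subseteq> {x \<in> S_of N. snd x \<noteq> snd e}" for U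
    using that by auto
  then show ?thesis
    using assms(1) sum_w'_eq S_of_insert_old_right[OF cand_edge(3) assms(2,3)]
    by (simp add: weights_dominated_def)
qed

context
  fixes S X Y U B
  assumes S_def: "S = S_of N"
    and X_def: "X = marg f M e" and Y_def: "Y = marg f (M \<union> S) e"
    and U_def: "U = sum w {x \<in> S. snd x \<notin> snd ` M}" and B_def: "B = sum w {x \<in> S. snd x = snd e}"
begin

lemma S_subset_E: "S \<subseteq> E"
  using wf S_of_subset[of N] by (auto simp: wf_state_def S_def)

lemma finite_S: "finite S"
  using S_subset_E finite_subset finite_E by blast

lemma cand_notin_S: "e \<notin> S"
  using cand_edge(3) S_of_subset by (auto simp: S_def)

lemma free_weight_drop: "sum w {x \<in> S. snd x \<notin> snd ` M \<and> snd x \<noteq> snd e} = U - B"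
proof -
  have "{x \<in> S. snd x = snd e} \<subseteq> {x \<in> S. snd x \<notin> snd ` M}"
    using cand_edge(4) by (smt (verit) mem_Collect_eq subsetI)
  then have "U = sum w ({x \<in> S. snd x \<notin> snd ` M} - {x \<in> S. snd x = snd e}) + B"
    unfolding U_def B_def using finite_S by (intro sum.subset_diff) auto
  moreover have "{x \<in> S. snd x \<notin> snd ` M} - {x \<in> S. snd x = snd e}
      = {x \<in> S. snd x \<notin> snd ` M \<and> snd x \<noteq> snd e}"
    by auto
  ultimately show ?thesis
    by simp
qed

lemma potential_current: "potential f p \<delta> (M, N, W, w) = phi p (sum w S) \<delta> (f (M \<union> S) - f M) U"
  by (simp add: potential_def S_def U_def)

lemma potential_head:
  "potential f p \<delta> (insert e M, N, W', w') = phi p (sum w S) \<delta> (f (M \<union> S) - f M + Y - X) (U - B)"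
proof -
  have "{x \<in> S. snd x \<notin> snd ` insert e M} = {x \<in> S. snd x \<notin> snd ` M \<and> snd x \<noteq> snd e}"
    by auto
  moreover have "f (insert e M \<union> S) - f (insert e M) = f (M \<union> S) - f M + Y - X"
    by (simp add: X_def Y_def marg_def)
  ultimately show ?thesis
    using free_weight_drop cand_notin_S sum_w'_eq[of S]
      sum_w'_eq[of "{x \<in> S. snd x \<notin> snd ` M \<and> snd x \<noteq> snd e}"]
    by (simp add: potential_def S_def)
qed

lemma potential_tail_new_right:
  assumes "\<forall>e'\<in>N. snd e' \<noteq> snd e"
  shows "potential f p (\<delta> + X - Y) (M, insert e N, W', w')
    = phi p (sum w S + X) (\<delta> + X - Y) (f (M \<union> S) - f M + Y) (U + X)"
proof -
  have "{x \<in> insert e S. snd x \<notin> snd ` M} = insert e {x \<in> S. snd x \<notin> snd ` M}"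
    using cand_edge(4) by auto
  then have "sum w' (insert e S) = sum w S + X"
    "sum w' {x \<in> insert e S. snd x \<notin> snd ` M} = U + X"
    using finite_S cand_notin_S sum_w'_eq[of S] sum_w'_eq[of "{x \<in> S. snd x \<notin> snd ` M}"]
    by (simp_all add: w'_def X_def U_def)
  moreover have "f (M \<union> insert e S) - f M = f (M \<union> S) - f M + Y"
    by (simp add: Y_def marg_def)
  ultimately show ?thesis
    using S_of_insert_new_right[OF assms] by (simp add: potential_def S_def diff_add_eq)
qed

lemma potential_tail_old_right:
  assumes "e'' \<in> N" "snd e'' = snd e"
  shows "potential f p \<delta> (M, insert e N, W', w')
    = phi p (sum w S - B) \<delta> (f (M \<union> {x \<in> S. snd x \<noteq> snd e}) - f M) (U - B)"
proof -
  have "sum w S = sum w (S - {x \<in> S. snd x = snd e}) + B"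
    unfolding B_def using finite_S by (intro sum.subset_diff) auto
  moreover have "S - {x \<in> S. snd x = snd e} = {x \<in> S. snd x \<noteq> snd e}"
    by auto
  moreover have "{x \<in> {x \<in> S. snd x \<noteq> snd e}. snd x \<notin> snd ` M}
      = {x \<in> S. snd x \<notin> snd ` M \<and> snd x \<noteq> snd e}"
    by auto
  ultimately show ?thesis
    using S_of_insert_old_right[OF cand_edge(3) assms] free_weight_drop cand_notin_S
      sum_w'_eq[of "{x \<in> S. snd x \<noteq> snd e}"]
      sum_w'_eq[of "{x \<in> S. snd x \<notin> snd ` M \<and> snd x \<noteq> snd e}"]
    by (simp add: potential_def S_def)
qed

end

lemma potential_step:
  assumes dom: "weights_dominated f \<delta> (M, N, W, w)"
  obtains \<delta>' where "weights_dominated f \<delta>' (M, insert e N, W', w')"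
    and "potential f p \<delta> (M, N, W, w)
      \<le> p * potential f p \<delta> (insert e M, N, W', w') + (1 - p) * potential f p \<delta>' (M, insert e N, W', w')"
proof -
  define S where "S = S_of N"
  define X Y where "X = marg f M e" and "Y = marg f (M \<union> S) e"
  define U B where "U = sum w {x \<in> S. snd x \<notin> snd ` M}" and "B = sum w {x \<in> S. snd x = snd e}"
  note defs = S_def X_def Y_def U_def B_def
  have M_E: "M \<subseteq> E"
    using wf by (simp add: wf_state_def)
  have Y_le_X: "Y \<le> X"
    unfolding X_def Y_def using S_subset_E[OF defs] M_E cand_edge(1) by (intro marg_antimono) auto
  show thesis
  proof (cases "\<forall>e'\<in>N. snd e' \<noteq> snd e")
    case True
    then have "B = 0"
      unfolding B_def S_def using S_of_subset[of N] by (metis (mono_tags, lifting) Collect_empty_eq subsetD sum.empty)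
    have "weights_dominated f (\<delta> + X - Y) (M, insert e N, W', w')"
      using weights_dominated_tail_new_right[OF dom True] by (simp add: X_def Y_def S_def)
    moreover have "potential f p \<delta> (M, N, W, w)
        \<le> p * potential f p \<delta> (insert e M, N, W', w') + (1 - p) * potential f p (\<delta> + X - Y) (M, insert e N, W', w')"
      unfolding potential_current[OF defs] potential_head[OF defs] potential_tail_new_right[OF defs True] \<open>B = 0\<close>
      using phi_eq_average_new_right[OF p_pos] by simp
    ultimately show thesis
      by (rule that)
  next
    case False
    then obtain e'' where e'': "e'' \<in> N" "snd e'' = snd e"
      by auto
    have "f (M \<union> {x \<in> S. snd x \<noteq> snd e}) \<le> f (M \<union> S)"
      using S_subset_E[OF defs] M_E by (intro mono) auto
    then have "potential f p \<delta> (M, N, W, w)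
        \<le> p * potential f p \<delta> (insert e M, N, W', w') + (1 - p) * potential f p \<delta> (M, insert e N, W', w')"
      unfolding potential_current[OF defs] potential_head[OF defs] potential_tail_old_right[OF defs e'']
      using phi_le_average_old_right[OF p_pos p_less_1 Y_le_X] by simp
    then show thesis
      using that weights_dominated_tail_old_right[OF dom e''] by blast
  qed
qed

end

lemma select_cand:
  assumes "wf_state E (M, N, W, w)" "cands M W \<noteq> {}"
  shows "select f tb M (cands M W) \<in> cands M W"
proof -
  have "cands M W \<subseteq> E"
    using assms(1) by (auto simp: wf_state_def cands_def)
  then show ?thesis
    using assms(2) finite_subset[OF _ finite_E] inj_on_subset[OF inj_tb] by (intro select_mem) auto
qed

lemma wf_state_sim2_loop: "wf_state E st \<Longrightarrow> wf_state E (sim2_loop f tb c i n st)"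
proof (induction n arbitrary: i st)
  case (Suc n)
  obtain M N W w where st: "st = (M, N, W, w)"
    by (cases st)
  show ?case
  proof (cases "cands M W = {}")
    case False
    note wf = Suc.prems[unfolded st]
    note successors = wf_state_successors[OF wf select_cand[OF wf False] refl refl]
    show ?thesis
      using False Suc.IH[OF successors(1)] Suc.IH[OF successors(2)] by (simp add: st Let_def)
  qed (use Suc.prems st in simp)
qed simp

lemma potential_le_gain:
  assumes "wf_state E st" "weights_dominated f \<delta> st"
  shows "potential f p \<delta> st \<le> gain f p st"
proof -
  obtain M N W w where st: "st = (M, N, W, w)"
    by (cases st)
  have "0 \<le> f (M \<union> S_of N) - f M"
    using assms(1) S_of_subset[of N] mono[of M "M \<union> S_of N"] by (auto simp: wf_state_def st)
  then have "0 \<le> (1 - p) * (f (M \<union> S_of N) - f M)"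
    using p_less_1 by simp
  moreover have "0 \<le> sum w {x \<in> S_of N. snd x \<notin> snd ` M}"
    using assms(1) S_of_subset[of N] by (intro sum_nonneg) (auto simp: wf_state_def st)
  then have "0 \<le> (1 - p)\<^sup>2 / p * sum w {x \<in> S_of N. snd x \<notin> snd ` M}"
    using p_pos by simp
  ultimately have "potential f p \<delta> st \<le> (1 - p) / p * sum w (S_of N) - \<delta>"
    unfolding potential_def phi_def st by simp
  also have "\<dots> = f (S_of N) - (2 - 1 / p) * sum w (S_of N) - (f (S_of N) + \<delta> - sum w (S_of N))"
    using p_pos by (simp add: field_simps)
  also have "\<dots> \<le> gain f p st"
    using assms(2) by (auto simp: weights_dominated_def gain_def st)
  finally show ?thesis .
qed

lemma expected_gain_Suc:
  fixes w :: "'l \<times> 'r \<Rightarrow> real"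
  assumes "cands M W \<noteq> {}"
  defines "e \<equiv> select f tb M (cands M W)"
  defines "W' \<equiv> W - {e' \<in> W. fst e' = fst e}" and "w' \<equiv> w(e := marg f M e)"
  defines "expect \<equiv> \<lambda>A g. measure_pmf.expectation (Pi_pmf A False (\<lambda>_. bernoulli_pmf p)) g"
  shows "expect {i..<i + Suc n} (\<lambda>c. gain f p (sim2_loop f tb c i (Suc n) (M, N, W, w)))
    = p * expect {Suc i..<Suc i + n} (\<lambda>c. gain f p (sim2_loop f tb c (Suc i) n (insert e M, N, W', w')))
      + (1 - p) * expect {Suc i..<Suc i + n} (\<lambda>c. gain f p (sim2_loop f tb c (Suc i) n (M, insert e N, W', w')))"
proof -
  have "{i..<i + Suc n} = insert i {Suc i..<Suc i + n}"
    by auto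
  then show ?thesis
    unfolding expect_def using p_pos p_less_1
    by (simp only:) (subst expectation_Pi_pmf_bernoulli_insert,
      auto simp del: sim2_loop.simps simp add: sim2_loop_Suc_update[OF assms(1)] e_def W'_def w'_def)
qed

lemma potential_le_expected_gain:
  assumes "wf_state E st" "weights_dominated f \<delta> st"
  shows "potential f p \<delta> st \<le> measure_pmf.expectation (Pi_pmf {i..<i + n} False (\<lambda>_. bernoulli_pmf p))
           (\<lambda>c. gain f p (sim2_loop f tb c i n st))"
  using assms
proof (induction n arbitrary: i st \<delta>)
  case 0
  then show ?case
    using potential_le_gain by simp
next
  case (Suc n)
  obtain M N W w where st: "st = (M, N, W, w)"
    by (cases st)
  show ?case
  proof (cases "cands M W = {}")
    case True
    then show ?thesis
      using potential_le_gain[OF Suc.prems] by (simp add: st)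
  next
    case False
    define e where "e = select f tb M (cands M W)"
    define W' where "W' = W - {e' \<in> W. fst e' = fst e}"
    define w' where "w' = w(e := marg f M e)"
    have wf: "wf_state E (M, N, W, w)" and e: "e \<in> cands M W"
      using Suc.prems select_cand False by (auto simp: st e_def)
    obtain \<delta>' where dom': "weights_dominated f \<delta>' (M, insert e N, W', w')"
      and step: "potential f p \<delta> st
        \<le> p * potential f p \<delta> (insert e M, N, W', w') + (1 - p) * potential f p \<delta>' (M, insert e N, W', w')"
      using potential_step[OF wf e W'_def w'_def] Suc.prems(2) by (auto simp: st)
    have "potential f p \<delta> (insert e M, N, W', w')
        \<le> measure_pmf.expectation (Pi_pmf {Suc i..<Suc i + n} False (\<lambda>_. bernoulli_pmf p))
            (\<lambda>c. gain f p (sim2_loop f tb c (Suc i) n (insert e M, N, W', w')))"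
      using Suc.prems(2) by (intro Suc.IH wf_state_successors(1)[OF wf e W'_def w'_def]
        weights_dominated_head[OF wf e W'_def w'_def]) (simp add: st)
    moreover have "potential f p \<delta>' (M, insert e N, W', w')
        \<le> measure_pmf.expectation (Pi_pmf {Suc i..<Suc i + n} False (\<lambda>_. bernoulli_pmf p))
            (\<lambda>c. gain f p (sim2_loop f tb c (Suc i) n (M, insert e N, W', w')))"
      by (intro Suc.IH wf_state_successors(2)[OF wf e W'_def w'_def] dom')
    ultimately have "p * potential f p \<delta> (insert e M, N, W', w') + (1 - p) * potential f p \<delta>' (M, insert e N, W', w')
        \<le> measure_pmf.expectation (Pi_pmf {i..<i + Suc n} False (\<lambda>_. bernoulli_pmf p))
            (\<lambda>c. gain f p (sim2_loop f tb c i (Suc n) st))"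
      unfolding st expected_gain_Suc[OF False, where N = N and w = w, folded e_def, folded W'_def, folded w'_def]
      using p_pos p_less_1 by (intro add_mono mult_left_mono) auto
    then show ?thesis
      using step by linarith
  qed
qed

lemma expected_S_bounds:
  defines "Sf \<equiv> \<lambda>c. case simulate2 E f tb c of (M, N, w) \<Rightarrow> f (S_of N)"
    and "Sw \<equiv> \<lambda>c. case simulate2 E f tb c of (M, N, w) \<Rightarrow> sum w (S_of N)"
  shows "(2 - 1 / p) * measure_pmf.expectation (coins (card E) p) Sw \<le> measure_pmf.expectation (coins (card E) p) Sf"
    and "0 \<le> measure_pmf.expectation (coins (card E) p) Sw"
    and "0 \<le> measure_pmf.expectation (coins (card E) p) Sf"
proof -
  define st0 :: "('l, 'r) state" where "st0 = ({}, {}, E, \<lambda>_. 0)"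
  define final where "final c = sim2_loop f tb c 0 (card E) st0" for c
  have wf0: "wf_state E st0"
    by (simp add: st0_def wf_state_def is_matching_def)
  have "weights_dominated f 0 st0" "potential f p 0 st0 = 0"
    using nonneg[of "{}"] by (auto simp: st0_def weights_dominated_def potential_def phi_def S_of_def)
  then have "0 \<le> measure_pmf.expectation (coins (card E) p) (\<lambda>c. gain f p (final c))"
    using potential_le_expected_gain[OF wf0, of 0 0 "card E"]
    by (simp add: coins_def final_def atLeast0LessThan)
  moreover have "gain f p (final c) = Sf c - (2 - 1 / p) * Sw c" for c
    by (simp add: Sf_def Sw_def simulate2_def final_def st0_def gain_def split: prod.splits)
  moreover have "finite (set_pmf (coins (card E) p))"
    by (simp add: coins_def set_Pi_pmf finite_PiE_dflt)
  ultimately show "(2 - 1 / p) * measure_pmf.expectation (coins (card E) p) Sw \<le> measure_pmf.expectation (coins (card E) p) Sf"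
    by (simp add: integrable_measure_pmf_finite)
  have "0 \<le> Sf c \<and> 0 \<le> Sw c" for c
  proof -
    obtain M N W w where "final c = (M, N, W, w)"
      by (cases "final c")
    moreover have "wf_state E (final c)"
      unfolding final_def using wf0 by (rule wf_state_sim2_loop)
    ultimately show ?thesis
      using nonneg S_of_subset[of N]
      by (auto simp: Sf_def Sw_def simulate2_def final_def st0_def wf_state_def intro!: sum_nonneg)
  qed
  then show "0 \<le> measure_pmf.expectation (coins (card E) p) Sw" "0 \<le> measure_pmf.expectation (coins (card E) p) Sf"
    by (simp_all add: integral_nonneg)
qed

end

lemma theta_coefficient_le:
  fixes p t :: real
  assumes "0 < p" "p < 1" "0 < t"
  shows "1 / ((t + p / (1 - p)) / (p / (1 - p))) - 1 / (t * p\<^sup>2) \<le> max (2 - 1 / p) 0"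
proof -
  define D where "D = p + t * (1 - p)"
  have D_pos: "0 < D"
    using assms by (simp add: D_def add_pos_nonneg)
  have "t + p / (1 - p) = D / (1 - p)"
    using assms by (simp add: D_def field_simps)
  then have theta: "1 / ((t + p / (1 - p)) / (p / (1 - p))) = p / D"
    using assms by simp
  have "p / D - 1 / (t * p\<^sup>2) \<le> max (2 - 1 / p) 0"
  proof (cases "1 / 2 \<le> p")
    case True
    have "(2 - 1 / p) - (p / D - 1 / (t * p\<^sup>2))
        = ((1 - p) * (1 - p\<^sup>2) * t + (2 * p - 1) * p * (1 - p) * t\<^sup>2 + p) / (p\<^sup>2 * t * D)"
      using assms D_pos by (simp add: field_simps power2_eq_square) (simp add: D_def algebra_simps)
    moreover have "0 \<le> (1 - p) * (1 - p\<^sup>2) * t + (2 * p - 1) * p * (1 - p) * t\<^sup>2 + p"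
      using assms True by (simp add: power_le_one)
    ultimately have "p / D - 1 / (t * p\<^sup>2) \<le> 2 - 1 / p"
      using assms D_pos by (smt (verit) divide_nonneg_pos mult_pos_pos zero_less_power)
    then show ?thesis
      by simp
  next
    case False
    have "p ^ 3 \<le> 1 - p"
      using assms False power_decreasing[of 1 3 p] by simp
    then have "t * p ^ 3 \<le> t * (1 - p)"
      using assms by (intro mult_left_mono) auto
    then have "p * (t * p\<^sup>2) \<le> D"
      using assms by (simp add: D_def power2_eq_square power3_eq_cube algebra_simps)
    then have "p / D \<le> 1 / (t * p\<^sup>2)"
      using assms D_pos by (simp add: divide_simps)
    then show ?thesis
      by simp
  qed
  then show ?thesis
    unfolding theta .
qed

theorem lemma11:
  fixes L :: "'l set" and R :: "'r set" and E :: "('l \<times> 'r) set"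
    and f :: "('l \<times> 'r) set \<Rightarrow> real" and tb :: "'l \<times> 'r \<Rightarrow> nat"
    and p t :: real
  assumes "finite L" and "finite R" and "E \<subseteq> L \<times> R"
    and nonneg: "\<And>A. A \<subseteq> E \<Longrightarrow> f A \<ge> 0"
    and mono: "\<And>A B. A \<subseteq> B \<Longrightarrow> B \<subseteq> E \<Longrightarrow> f A \<le> f B"
    and submod: "\<And>A B. A \<subseteq> E \<Longrightarrow> B \<subseteq> E \<Longrightarrow> f (A \<union> B) + f (A \<inter> B) \<le> f A + f B"
    and "inj_on tb E"
    and "0 < p" and "p < 1" and "t > 0"
  shows "let \<alpha> = p / (1 - p); \<theta> = (t + \<alpha>) / \<alpha>;
             Sf = (\<lambda>c. case simulate2 E f tb c of (M, N, w) \<Rightarrow> f (S_of N));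
             Sw = (\<lambda>c. case simulate2 E f tb c of (M, N, w) \<Rightarrow> sum w (S_of N))
         in measure_pmf.expectation (coins (card E) p) Sf
              \<ge> (1 / \<theta> - 1 / (t * p\<^sup>2)) * measure_pmf.expectation (coins (card E) p) Sw"
proof -
  have "finite E"
    using assms(1-3) finite_subset by blast
  then interpret simulate2_setting E f tb p
    using assms by unfold_locales auto
  let ?ESf = "measure_pmf.expectation (coins (card E) p) (\<lambda>c. case simulate2 E f tb c of (M, N, w) \<Rightarrow> f (S_of N))"
  let ?ESw = "measure_pmf.expectation (coins (card E) p) (\<lambda>c. case simulate2 E f tb c of (M, N, w) \<Rightarrow> sum w (S_of N))"
  have "(1 / ((t + p / (1 - p)) / (p / (1 - p))) - 1 / (t * p\<^sup>2)) * ?ESw \<le> max (2 - 1 / p) 0 * ?ESw"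
    using theta_coefficient_le[of p t] assms(8-10) expected_S_bounds(2) by (intro mult_right_mono)
  also have "\<dots> \<le> ?ESf"
    using expected_S_bounds by (simp add: max_def)
  finally show ?thesis
    unfolding Let_def by simp
qed

end
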